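(* Let $(X,\pi)$ be a finite symmetric two-player game with relative payoff game $(X,\Delta)$, and suppose $\Delta$ is quasiconcave with respect to a total order $\le$ on $X$. (1) If $x^*$ is a fESS of $(X,\pi)$ and $x$ is between some $y\in X$ and $x^*$, then $\Delta(x,y)=-\Delta(y,x)\ge 0$. (2) If $x^*$ and $x^{**}$ are fESS of $(X,\pi)$, then so is every $x$ between $x^*$ and $x^{**}$.
   Context: $\pi(x,y)$ is the payoff of the player choosing $x$ against $y$; $\Delta(x,y)=\pi(x,y)-\pi(y,x)$. $\Delta$ is quasiconcave (single-peaked) with respect to a total order $\le$ on the finite set $X$ if for each $y\in X$ the function $x\mapsto\Delta(x,y)$ is weakly increasing up to some $k_y\in X$ and weakly decreasing from $k_y$ on (i.e. $\Delta(x,y)\le\Delta(x',y)$ for $x\le x'\le k_y$ and $\Delta(x,y)\ge\Delta(x',y)$ for $k_y\le x\le x'$). $x$ is between $x'$ and $x''$ if $x'\le x\le x''$ or $x''\le x\le x'$. An action $x^*$ is a fESS (finite population evolutionary stable strategy) if $\pi(x^*,x)\ge\pi(x,x^* )$, equivalently $\Delta(x^*,x)\ge0$, for all $x\in X$. *)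

theory Defs
  imports Complex_Main
begin

definition relpay :: "('a \<Rightarrow> 'a \<Rightarrow> real) \<Rightarrow> 'a \<Rightarrow> 'a \<Rightarrow> real" where
  "relpay \<pi> x y = \<pi> x y - \<pi> y x"

definition quasiconcave_on :: "'a::linorder set \<Rightarrow> ('a \<Rightarrow> 'a \<Rightarrow> real) \<Rightarrow> bool" where
  "quasiconcave_on X D \<longleftrightarrow>
     (\<forall>y\<in>X. \<exists>k\<in>X.
        (\<forall>x\<in>X. \<forall>x'\<in>X. x \<le> x' \<and> x' \<le> k \<longrightarrow> D x y \<le> D x' y) \<and>
        (\<forall>x\<in>X. \<forall>x'\<in>X. k \<le> x \<and> x \<le> x' \<longrightarrow> D x y \<ge> D x' y))"

definition between :: "'a::linorder \<Rightarrow> 'a \<Rightarrow> 'a \<Rightarrow> bool" where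
  "between x a b \<longleftrightarrow> (a \<le> x \<and> x \<le> b) \<or> (b \<le> x \<and> x \<le> a)"

definition fESS :: "'a set \<Rightarrow> ('a \<Rightarrow> 'a \<Rightarrow> real) \<Rightarrow> 'a \<Rightarrow> bool" where
  "fESS X \<pi> xs \<longleftrightarrow> xs \<in> X \<and> (\<forall>x\<in>X. \<pi> xs x \<ge> \<pi> x xs)"

end

theory Submission
  imports Defs
begin

text \<open>Single-peakedness of \<open>x \<mapsto> \<Delta>(x,y)\<close> means that at any point between \<open>a\<close> and \<open>b\<close>
  it is at least the smaller of its values at \<open>a\<close> and \<open>b\<close>. A fESS has nonnegative relative payoff
  against everything and \<open>\<Delta>(y,y) = 0\<close>, so both claims follow: in (1) take the endpoints \<open>y\<close>
  and \<open>x\<^sup>*\<close>, in (2) the endpoints \<open>x\<^sup>*\<close> and \<open>x\<^sup>*\<^sup>*\<close>.\<close>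

lemma quasiconcave_on_interval_ge_min:
  assumes "quasiconcave_on X D" "y \<in> X" "a \<in> X" "b \<in> X" "x \<in> X" "a \<le> x" "x \<le> b"
  shows "min (D a y) (D b y) \<le> D x y"
proof -
  from assms(1,2) obtain k where
    up: "\<forall>u\<in>X. \<forall>v\<in>X. u \<le> v \<and> v \<le> k \<longrightarrow> D u y \<le> D v y" and
    down: "\<forall>u\<in>X. \<forall>v\<in>X. k \<le> u \<and> u \<le> v \<longrightarrow> D v y \<le> D u y"
    unfolding quasiconcave_on_def by blast
  show ?thesis
  proof (cases "x \<le> k")
    case True
    then have "D a y \<le> D x y" using up assms(3,5,6) by blast
    then show ?thesis by linarith
  next
    case False
    then have "D b y \<le> D x y" using down assms(4,5,7) by simp
    then show ?thesis by linarith
  qed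
qed

lemma quasiconcave_on_between_ge_min:
  assumes "quasiconcave_on X D" "y \<in> X" "a \<in> X" "b \<in> X" "x \<in> X" "between x a b"
  shows "min (D a y) (D b y) \<le> D x y"
  using assms(6) unfolding between_def
proof
  assume "a \<le> x \<and> x \<le> b"
  then show ?thesis using quasiconcave_on_interval_ge_min[OF assms(1-5)] by simp
next
  assume "b \<le> x \<and> x \<le> a"
  then show ?thesis using quasiconcave_on_interval_ge_min[OF assms(1,2,4,3,5)] by linarith
qed

lemma relpay_swap: "relpay \<pi> x y = - relpay \<pi> y x"
  by (simp add: relpay_def)

lemma relpay_self [simp]: "relpay \<pi> x x = 0"
  by (simp add: relpay_def)

lemma fESS_iff_relpay_nonneg: "fESS X \<pi> x \<longleftrightarrow> x \<in> X \<and> (\<forall>y\<in>X. 0 \<le> relpay \<pi> x y)"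
  by (simp add: fESS_def relpay_def)

lemma relpay_nonneg_between_fESS:
  assumes "quasiconcave_on X (relpay \<pi>)" "fESS X \<pi> xs" "y \<in> X" "x \<in> X" "between x y xs"
  shows "0 \<le> relpay \<pi> x y"
proof -
  have xs: "xs \<in> X" "0 \<le> relpay \<pi> xs y"
    using assms(2,3) by (auto simp: fESS_iff_relpay_nonneg)
  have "min (relpay \<pi> y y) (relpay \<pi> xs y) \<le> relpay \<pi> x y"
    using quasiconcave_on_between_ge_min[OF assms(1,3,3) xs(1) assms(4,5)] .
  with xs(2) show ?thesis by simp
qed

lemma fESS_between_fESS:
  assumes "quasiconcave_on X (relpay \<pi>)" "fESS X \<pi> xs" "fESS X \<pi> xss" "x \<in> X"
    "between x xs xss"
  shows "fESS X \<pi> x"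
  unfolding fESS_iff_relpay_nonneg
proof (intro conjI ballI)
  show "x \<in> X" by fact
next
  fix z assume "z \<in> X"
  with assms(2,3) have ess: "xs \<in> X" "xss \<in> X" "0 \<le> relpay \<pi> xs z" "0 \<le> relpay \<pi> xss z"
    by (auto simp: fESS_iff_relpay_nonneg)
  have "min (relpay \<pi> xs z) (relpay \<pi> xss z) \<le> relpay \<pi> x z"
    using quasiconcave_on_between_ge_min[OF assms(1) \<open>z \<in> X\<close> ess(1,2) assms(4,5)] .
  with ess(3,4) show "0 \<le> relpay \<pi> x z" by linarith
qed

theorem lemma5:
  fixes X :: "'a::linorder set" and \<pi> :: "'a \<Rightarrow> 'a \<Rightarrow> real"
  assumes "finite X"
    and "quasiconcave_on X (relpay \<pi>)"
  shows "(\<forall>xs y x. fESS X \<pi> xs \<and> y \<in> X \<and> x \<in> X \<and> between x y xs \<longrightarrow>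
             relpay \<pi> x y = - relpay \<pi> y x \<and> relpay \<pi> x y \<ge> 0)
       \<and> (\<forall>xs xss x. fESS X \<pi> xs \<and> fESS X \<pi> xss \<and> x \<in> X \<and> between x xs xss \<longrightarrow>
             fESS X \<pi> x)"
proof (intro conjI allI impI)
  fix xs y x
  show "relpay \<pi> x y = - relpay \<pi> y x" by (rule relpay_swap)
  assume "fESS X \<pi> xs \<and> y \<in> X \<and> x \<in> X \<and> between x y xs"
  then show "0 \<le> relpay \<pi> x y"
    using relpay_nonneg_between_fESS[OF assms(2)] by (elim conjE)
next
  fix xs xss x assume "fESS X \<pi> xs \<and> fESS X \<pi> xss \<and> x \<in> X \<and> between x xs xss"
  then show "fESS X \<pi> x"
    using fESS_between_fESS[OF assms(2)] by (elim conjE)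
qed

end
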